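(* Let $A\ne0$ be a real symmetric weighted adjacency matrix of a finite simple graph on $n$ vertices, and let $y\in\mathbb R$ satisfy $W_A(y)=\min\{W_A(x):\lambda_{\min}(A)^{-1}\le x\le\lambda_{\max}(A)^{-1}\}$. Then there exists $\boldsymbol u\in\mathbb R^n$ with $$|\boldsymbol u|^2=W_A(y),\qquad\langle\boldsymbol u,A\boldsymbol u\rangle=0,\qquad|\boldsymbol u|^2=\langle\boldsymbol 1,\boldsymbol u\rangle.$$
   Context: A weighted adjacency matrix is a real symmetric $A$ with $A_{ii}=0$ and $A_{ij}=0$ for non-adjacent $i\ne j$. $\boldsymbol 1$ is the all-ones vector. $W_A(x)=\sum_{\lambda\in\sigma(A)}\frac{\langle\boldsymbol 1,P_\lambda\boldsymbol 1\rangle}{1-\lambda x}$ with $P_\lambda$ the orthogonal eigenprojections of $A$, terms with $\langle\boldsymbol 1,P_\lambda\boldsymbol 1\rangle=0$ omitted, and value $+\infty$ at a pole. *)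

theory Defs
  imports "HOL-Analysis.Analysis"
begin

definition weighted_adjacency :: "('n::finite \<Rightarrow> 'n \<Rightarrow> bool) \<Rightarrow> real^'n^'n \<Rightarrow> bool" where
  "weighted_adjacency E A \<longleftrightarrow>
     (\<forall>i j. E i j \<longrightarrow> E j i) \<and> (\<forall>i. \<not> E i i) \<and>
     transpose A = A \<and> (\<forall>i. A $ i $ i = 0) \<and>
     (\<forall>i j. i \<noteq> j \<and> \<not> E i j \<longrightarrow> A $ i $ j = 0)"

definition spec :: "real^'n^'n \<Rightarrow> real set" where
  "spec A = {l. \<exists>v. v \<noteq> 0 \<and> A *v v = l *\<^sub>R v}"

definition eigenspace :: "real^'n^'n \<Rightarrow> real \<Rightarrow> (real^'n) set" where
  "eigenspace A l = {v. A *v v = l *\<^sub>R v}"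

definition orth_proj :: "(real^'n) set \<Rightarrow> real^'n \<Rightarrow> real^'n" where
  "orth_proj S x = (THE p. p \<in> S \<and> (\<forall>w\<in>S. (x - p) \<bullet> w = 0))"

definition spec_weight :: "real^'n^'n \<Rightarrow> real \<Rightarrow> real" where
  "spec_weight A l = vec 1 \<bullet> orth_proj (eigenspace A l) (vec 1)"

definition W :: "real^'n^'n \<Rightarrow> real \<Rightarrow> ereal" where
  "W A x = (let L = {l \<in> spec A. spec_weight A l \<noteq> 0} in
     if \<exists>l\<in>L. 1 - l * x = 0 then \<infinity>
     else ereal (\<Sum>l\<in>L. spec_weight A l / (1 - l * x)))"

definition lambda_min :: "real^'n^'n \<Rightarrow> real" where
  "lambda_min A = Min (spec A)"

definition lambda_max :: "real^'n^'n \<Rightarrow> real" where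
  "lambda_max A = Max (spec A)"

end

theory Submission
  imports Defs
begin

text \<open>Write \<open>p\<^sub>\<lambda>\<close> for the component of \<open>\<one>\<close> in the \<open>\<lambda>\<close>-eigenspace of \<open>A\<close>, so that
  \<open>\<langle>\<one>, P\<^sub>\<lambda> \<one>\<rangle> = |p\<^sub>\<lambda>|\<^sup>2\<close>, and \<open>L\<close> for the eigenvalues with \<open>p\<^sub>\<lambda> \<noteq> 0\<close>. Away from the poles
  of \<open>W\<close>, the vector \<open>u(x) = \<Sum>\<^sub>\<lambda>\<^sub>\<in>\<^sub>L p\<^sub>\<lambda> / (1 - \<lambda>x)\<close> satisfies \<open>\<langle>\<one>, u\<rangle> = W(x)\<close>,
  \<open>\<langle>u, A u\<rangle> = W'(x)\<close> and \<open>|u|\<^sup>2 = W(x) + x W'(x)\<close>. Since \<open>A \<noteq> 0\<close> has zero diagonal, its quadratic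
  form takes both signs, so \<open>\<lambda>\<^sub>m\<^sub>i\<^sub>n < 0 < \<lambda>\<^sub>m\<^sub>a\<^sub>x\<close> and \<open>0\<close> lies in the interval; hence a minimiser
  \<open>x\<close> of \<open>W\<close> is not a pole. Either \<open>W'(x) = 0\<close> and \<open>u(x)\<close> itself works, or \<open>x = 1/\<mu>\<close> is an
  endpoint with \<open>x W'(x) \<le> 0\<close>. In the latter case \<open>\<mu> \<notin> L\<close> (otherwise \<open>x\<close> would be a pole), so
  a unit \<open>\<mu>\<close>-eigenvector \<open>v\<close> is orthogonal to \<open>\<one>\<close> and to \<open>u(x)\<close>, and \<open>u(x) + t v\<close> with
  \<open>t\<^sup>2 = - x W'(x)\<close> works.\<close>

lemma symmetric_matrix_inner:
  fixes A :: "real^'n^'n"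
  assumes "transpose A = A"
  shows "(A *v x) \<bullet> y = x \<bullet> (A *v y)"
  by (metis assms dot_lmul_matrix vector_transpose_matrix)

lemma matrix_vector_mult_uminus: "(- A) *v x = - (A *v (x::real^'n))"
  by (simp add: matrix_vector_mult_def vec_eq_iff sum_negf)

lemma matrix_vector_mult_sum: "A *v (\<Sum>i\<in>I. f i) = (\<Sum>i\<in>I. A *v (f i::real^'n))"
  using linear_sum[OF matrix_vector_mul_linear] by blast

lemma transpose_uminus: "transpose (- A) = - transpose (A::real^'n^'n)"
  by (simp add: transpose_def vec_eq_iff)

lemma eigenvectors_orthogonal:
  fixes A :: "real^'n^'n"
  assumes "transpose A = A" "A *v v = l *\<^sub>R v" "A *v w = k *\<^sub>R w" "l \<noteq> k"
  shows "v \<bullet> w = 0"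
proof -
  have "l * (v \<bullet> w) = (A *v v) \<bullet> w" using assms(2) by simp
  also have "\<dots> = v \<bullet> (A *v w)" by (rule symmetric_matrix_inner[OF assms(1)])
  also have "\<dots> = k * (v \<bullet> w)" using assms(3) by simp
  finally show ?thesis using assms(4) by simp
qed

lemma finite_spec_symmetric:
  fixes A :: "real^'n^'n"
  assumes "transpose A = A"
  shows "finite (spec A)"
proof (rule ccontr)
  assume "infinite (spec A)"
  then obtain F where F: "F \<subseteq> spec A" "finite F" "card F = Suc CARD('n)"
    using infinite_arbitrarily_large by blast
  define e where "e = (\<lambda>l. SOME v. v \<noteq> 0 \<and> A *v v = l *\<^sub>R v)"
  have e: "e l \<noteq> 0" "A *v e l = l *\<^sub>R e l" if "l \<in> F" for l
    using someI_ex[of "\<lambda>v. v \<noteq> 0 \<and> A *v v = l *\<^sub>R v"] that F(1)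
    unfolding spec_def e_def by blast+
  have "inj_on e F"
    by (rule inj_onI) (metis e scaleR_cancel_right)
  moreover have "independent (e ` F)"
  proof (rule pairwise_orthogonal_independent)
    show "pairwise orthogonal (e ` F)"
      unfolding pairwise_def orthogonal_def
      by (metis e(2) eigenvectors_orthogonal[OF assms] imageE)
    show "0 \<notin> e ` F" using e(1) by auto
  qed
  then have "card (e ` F) \<le> CARD('n)"
    using independent_bound by fastforce
  ultimately show False using F(3) card_image by fastforce
qed

lemma quadratic_nonneg_imp_linear_coeff_zero:
  fixes a c :: real
  assumes "\<And>t. 0 \<le> t\<^sup>2 * c - 2 * t * a"
  shows "a = 0"
proof -
  have "((\<lambda>t. t\<^sup>2 * c - 2 * t * a) has_real_derivative - 2 * a) (at 0)"
    by (auto intro!: derivative_eq_intros)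
  then have "- 2 * a = 0"
    by (rule DERIV_local_min[where d = 1]) (use assms in auto)
  then show ?thesis by simp
qed

lemma rayleigh_maximizer_is_eigenvector:
  fixes A :: "real^'n^'n"
  assumes sym: "transpose A = A"
    and le: "\<And>x. x \<bullet> (A *v x) \<le> M * (norm x)\<^sup>2"
    and eq: "v \<bullet> (A *v v) = M * (norm v)\<^sup>2"
  shows "A *v v = M *\<^sub>R v"
proof -
  define r where "r = A *v v - M *\<^sub>R v"
  have "0 \<le> t\<^sup>2 * (M * (norm r)\<^sup>2 - r \<bullet> (A *v r)) - 2 * t * (norm r)\<^sup>2" for t
  proof -
    have "v \<bullet> (A *v r) = r \<bullet> (A *v v)"
      using symmetric_matrix_inner[OF sym, of v r] by (simp add: inner_commute)
    moreover have "r \<bullet> (A *v v) - M * (v \<bullet> r) = (norm r)\<^sup>2"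
      by (simp add: r_def power2_norm_eq_inner inner_diff_left inner_diff_right
          inner_commute algebra_simps)
    ultimately have "M * (norm (v + t *\<^sub>R r))\<^sup>2 - (v + t *\<^sub>R r) \<bullet> (A *v (v + t *\<^sub>R r))
        = t\<^sup>2 * (M * (norm r)\<^sup>2 - r \<bullet> (A *v r)) - 2 * t * (norm r)\<^sup>2"
      using eq unfolding power2_norm_eq_inner
      by (simp add: matrix_vector_right_distrib matrix_vector_mult_scaleR inner_add_left
          inner_add_right inner_commute power2_eq_square algebra_simps)
    with le[of "v + t *\<^sub>R r"] show ?thesis by linarith
  qed
  then have "(norm r)\<^sup>2 = 0" by (rule quadratic_nonneg_imp_linear_coeff_zero)
  then show ?thesis by (simp add: r_def)
qed

lemma symmetric_matrix_max_eigenvalue: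
  fixes A :: "real^'n^'n"
  assumes sym: "transpose A = A"
  obtains M where "M \<in> spec A" "\<And>x. x \<bullet> (A *v x) \<le> M * (norm x)\<^sup>2"
proof -
  let ?q = "\<lambda>x::real^'n. x \<bullet> (A *v x)"
  have "continuous_on (sphere 0 1) ?q"
    by (intro continuous_intros linear_continuous_on matrix_vector_mul_linear[folded linear_linear])
  moreover have "axis undefined 1 \<in> sphere (0::real^'n) 1" by simp
  ultimately obtain v where v: "v \<in> sphere 0 1" and v_max: "\<And>x. x \<in> sphere 0 1 \<Longrightarrow> ?q x \<le> ?q v"
    using continuous_attains_sup[OF compact_sphere] by (metis empty_iff)
  have le: "?q x \<le> ?q v * (norm x)\<^sup>2" for x
  proof (cases "x = 0")
    case False
    have "?q (x /\<^sub>R norm x) \<le> ?q v" using False by (intro v_max) simp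
    then show ?thesis
      using False by (simp add: matrix_vector_mult_scaleR field_simps power2_eq_square)
  qed simp
  have "A *v v = ?q v *\<^sub>R v"
    by (rule rayleigh_maximizer_is_eigenvector[OF sym le]) (use v in simp)
  moreover have "v \<noteq> 0" using v by auto
  ultimately show ?thesis using that le unfolding spec_def by blast
qed

lemma zero_diagonal_quadratic_form_pos:
  fixes A :: "real^'n^'n"
  assumes sym: "transpose A = A" and diag: "\<forall>i. A $ i $ i = 0" and "A \<noteq> 0"
  obtains x where "x \<bullet> (A *v x) > 0"
proof -
  obtain i j where ij: "A $ i $ j \<noteq> 0" using \<open>A \<noteq> 0\<close> by (metis vec_eq_iff zero_index)
  have entry: "axis k 1 \<bullet> (A *v axis l 1) = A $ k $ l" for k l
    by (simp add: inner_axis' matrix_vector_mul_component inner_axis)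
  have "A $ j $ i = A $ i $ j" using sym by (metis transpose_def vec_lambda_beta)
  then have "(axis i 1 + A $ i $ j *\<^sub>R axis j 1) \<bullet> (A *v (axis i 1 + A $ i $ j *\<^sub>R axis j 1))
      = 2 * (A $ i $ j)\<^sup>2"
    by (simp add: matrix_vector_right_distrib matrix_vector_mult_scaleR inner_add_left
        inner_add_right entry diag power2_eq_square)
  moreover have "0 < 2 * (A $ i $ j)\<^sup>2" using ij by simp
  ultimately show ?thesis using that by metis
qed

lemma zero_diagonal_pos_eigenvalue:
  fixes A :: "real^'n^'n"
  assumes sym: "transpose A = A" and "\<forall>i. A $ i $ i = 0" "A \<noteq> 0"
  shows "\<exists>M\<in>spec A. 0 < M"
proof -
  obtain x where "x \<bullet> (A *v x) > 0" using zero_diagonal_quadratic_form_pos[OF assms] by blast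
  moreover obtain M where "M \<in> spec A" "x \<bullet> (A *v x) \<le> M * (norm x)\<^sup>2"
    using symmetric_matrix_max_eigenvalue[OF sym] by metis
  ultimately show ?thesis by (metis mult_nonpos_nonneg not_le order.strict_trans2 zero_le_power2)
qed

lemma weighted_adjacency_spec_signs:
  assumes "weighted_adjacency E A" "A \<noteq> 0"
  shows "lambda_min A \<in> spec A" "lambda_max A \<in> spec A"
    and "lambda_min A < 0" "0 < lambda_max A"
proof -
  have sym: "transpose A = A" and diag: "\<forall>i. A $ i $ i = 0"
    using assms(1) unfolding weighted_adjacency_def by auto
  have fin: "finite (spec A)" by (rule finite_spec_symmetric[OF sym])
  obtain M where M: "M \<in> spec A" "0 < M"
    using zero_diagonal_pos_eigenvalue sym diag assms(2) by blast
  obtain M' where M': "M' \<in> spec (- A)" "0 < M'"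
    using zero_diagonal_pos_eigenvalue[of "- A"] sym diag assms(2) by (auto simp: transpose_uminus)
  then have "- M' \<in> spec A"
    unfolding spec_def by (auto simp: matrix_vector_mult_uminus) (metis minus_equation_iff scaleR_minus_left)
  show "lambda_min A \<in> spec A" "lambda_max A \<in> spec A"
    using fin M(1) unfolding lambda_min_def lambda_max_def by (auto intro: Min_in Max_in)
  show "lambda_min A < 0"
    using Min_le[OF fin \<open>- M' \<in> spec A\<close>] M'(2) unfolding lambda_min_def by linarith
  show "0 < lambda_max A"
    using Max_ge[OF fin M(1)] M(2) unfolding lambda_max_def by linarith
qed

lemma orth_proj_subspace:
  fixes S :: "(real^'n) set"
  assumes "subspace S"
  shows "orth_proj S x \<in> S" and "w \<in> S \<Longrightarrow> (x - orth_proj S x) \<bullet> w = 0"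
proof -
  obtain y z where yz: "y \<in> span S" "\<And>w. w \<in> span S \<Longrightarrow> orthogonal z w" "x = y + z"
    using orthogonal_subspace_decomp_exists by blast
  have span: "span S = S" using assms by (simp add: span_eq_iff)
  have y: "y \<in> S \<and> (\<forall>w\<in>S. (x - y) \<bullet> w = 0)" using yz span by (auto simp: orthogonal_def)
  have "p = y" if p: "p \<in> S \<and> (\<forall>w\<in>S. (x - p) \<bullet> w = 0)" for p
  proof -
    have "p - y \<in> S" using p y assms by (simp add: subspace_diff)
    then have "(x - y) \<bullet> (p - y) - (x - p) \<bullet> (p - y) = 0" using p y by simp
    then have "(p - y) \<bullet> (p - y) = 0" by (simp add: inner_diff_left)
    then show ?thesis by simp
  qed
  then have "orth_proj S x = y"
    unfolding orth_proj_def using y by (intro the_equality) blast+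
  then show "orth_proj S x \<in> S" and "w \<in> S \<Longrightarrow> (x - orth_proj S x) \<bullet> w = 0"
    using y by auto
qed

lemma subspace_eigenspace: "subspace (eigenspace A l)"
  unfolding subspace_def eigenspace_def
  by (auto simp: matrix_vector_right_distrib matrix_vector_mult_scaleR scaleR_add_right)

definition proj_one :: "real^'n^'n \<Rightarrow> real \<Rightarrow> real^'n" where
  "proj_one A l = orth_proj (eigenspace A l) (vec 1)"

lemma proj_one_eigenvector: "A *v proj_one A l = l *\<^sub>R proj_one A l"
  using orth_proj_subspace(1)[OF subspace_eigenspace]
  unfolding proj_one_def eigenspace_def by blast

lemma proj_one_orthogonal: "A *v v = l *\<^sub>R v \<Longrightarrow> (vec 1 - proj_one A l) \<bullet> v = 0"
  using orth_proj_subspace(2)[OF subspace_eigenspace]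
  unfolding proj_one_def eigenspace_def by blast

lemma spec_weight_eq_inner: "spec_weight A l = proj_one A l \<bullet> proj_one A l"
  using proj_one_orthogonal[OF proj_one_eigenvector, of A l]
  unfolding spec_weight_def proj_one_def[symmetric] by (simp add: inner_diff_left)

lemma inner_one_eigenvector_eq_zero:
  assumes "spec_weight A l = 0" "A *v v = l *\<^sub>R v"
  shows "vec 1 \<bullet> v = 0"
  using proj_one_orthogonal[OF assms(2)] assms(1)
  by (simp add: spec_weight_eq_inner inner_diff_left)

lemma inner_sum_proj_one:
  fixes A :: "real^'n^'n" and c :: "real \<Rightarrow> real"
  assumes sym: "transpose A = A" and "finite S"
  defines "u \<equiv> \<Sum>l\<in>S. c l *\<^sub>R proj_one A l"
  shows "vec 1 \<bullet> u = (\<Sum>l\<in>S. c l * spec_weight A l)"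
    and "u \<bullet> u = (\<Sum>l\<in>S. (c l)\<^sup>2 * spec_weight A l)"
    and "u \<bullet> (A *v u) = (\<Sum>l\<in>S. (c l)\<^sup>2 * l * spec_weight A l)"
proof -
  have component: "proj_one A l \<bullet> u = c l * spec_weight A l" if "l \<in> S" for l
  proof -
    have "proj_one A l \<bullet> u = (\<Sum>k\<in>S. if k = l then c l * spec_weight A l else 0)"
      unfolding u_def inner_sum_right
      by (intro sum.cong) (auto simp: spec_weight_eq_inner
          eigenvectors_orthogonal[OF sym proj_one_eigenvector proj_one_eigenvector])
    then show ?thesis using that \<open>finite S\<close> by simp
  qed
  show "vec 1 \<bullet> u = (\<Sum>l\<in>S. c l * spec_weight A l)"
    by (simp add: u_def inner_sum_right spec_weight_def proj_one_def)
  have "u \<bullet> u = (\<Sum>l\<in>S. c l * (proj_one A l \<bullet> u))"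
    unfolding u_def by (simp add: inner_sum_left)
  also have "\<dots> = (\<Sum>l\<in>S. (c l)\<^sup>2 * spec_weight A l)"
    by (intro sum.cong) (auto simp: component power2_eq_square)
  finally show "u \<bullet> u = (\<Sum>l\<in>S. (c l)\<^sup>2 * spec_weight A l)" .
  have "A *v u = (\<Sum>l\<in>S. (c l * l) *\<^sub>R proj_one A l)"
    unfolding u_def by (simp add: matrix_vector_mult_sum matrix_vector_mult_scaleR proj_one_eigenvector)
  then have "u \<bullet> (A *v u) = (\<Sum>l\<in>S. (c l * l) * (proj_one A l \<bullet> u))"
    by (simp add: inner_commute[of u] inner_sum_left)
  also have "\<dots> = (\<Sum>l\<in>S. (c l)\<^sup>2 * l * spec_weight A l)"
    by (intro sum.cong) (auto simp: component power2_eq_square)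
  finally show "u \<bullet> (A *v u) = (\<Sum>l\<in>S. (c l)\<^sup>2 * l * spec_weight A l)" .
qed

definition weighted_spec :: "real^'n^'n \<Rightarrow> real set" where
  "weighted_spec A = {l \<in> spec A. spec_weight A l \<noteq> 0}"

definition W_sum :: "real^'n^'n \<Rightarrow> real \<Rightarrow> real" where
  "W_sum A x = (\<Sum>l\<in>weighted_spec A. spec_weight A l / (1 - l * x))"

definition W_deriv :: "real^'n^'n \<Rightarrow> real \<Rightarrow> real" where
  "W_deriv A x = (\<Sum>l\<in>weighted_spec A. spec_weight A l * l / (1 - l * x)\<^sup>2)"

text \<open>Away from poles, this is \<open>(I - x A)\<^sup>-\<^sup>1 \<one>\<close>.\<close>

definition resolvent_one :: "real^'n^'n \<Rightarrow> real \<Rightarrow> real^'n" where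
  "resolvent_one A x = (\<Sum>l\<in>weighted_spec A. (1 / (1 - l * x)) *\<^sub>R proj_one A l)"

lemma W_eq_W_sum: "\<forall>l\<in>weighted_spec A. l * x \<noteq> 1 \<Longrightarrow> W A x = ereal (W_sum A x)"
  unfolding W_def W_sum_def weighted_spec_def Let_def by auto

lemma W_pole: "l \<in> weighted_spec A \<Longrightarrow> l * x = 1 \<Longrightarrow> W A x = \<infinity>"
  unfolding W_def weighted_spec_def Let_def by auto

lemma finite_weighted_spec: "transpose A = A \<Longrightarrow> finite (weighted_spec A)"
  unfolding weighted_spec_def by (simp add: finite_spec_symmetric)

lemma W_sum_has_real_derivative:
  assumes "transpose A = A" "\<forall>l\<in>weighted_spec A. l * x \<noteq> 1"
  shows "(W_sum A has_real_derivative W_deriv A x) (at x within S)"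
  unfolding W_sum_def[abs_def] W_deriv_def using assms
  by (auto intro!: derivative_eq_intros DERIV_sum simp: finite_weighted_spec field_simps power2_eq_square)

lemma resolvent_one_identities:
  fixes A :: "real^'n^'n"
  assumes sym: "transpose A = A" and no_pole: "\<forall>l\<in>weighted_spec A. l * x \<noteq> 1"
  shows "vec 1 \<bullet> resolvent_one A x = W_sum A x"
    and "resolvent_one A x \<bullet> (A *v resolvent_one A x) = W_deriv A x"
    and "(norm (resolvent_one A x))\<^sup>2 = W_sum A x + x * W_deriv A x"
proof -
  note sums = inner_sum_proj_one[OF sym finite_weighted_spec[OF sym], of "\<lambda>l. 1 / (1 - l * x)",
      folded resolvent_one_def]
  show "vec 1 \<bullet> resolvent_one A x = W_sum A x"
    using sums(1) by (simp add: W_sum_def)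
  show "resolvent_one A x \<bullet> (A *v resolvent_one A x) = W_deriv A x"
    by (simp add: sums(3) W_deriv_def power_divide mult.commute)
  have "(1 / (1 - l * x))\<^sup>2 * w = w / (1 - l * x) + x * (w * l / (1 - l * x)\<^sup>2)"
    if "l * x \<noteq> 1" for l w
  proof -
    define d where "d = 1 - l * x"
    have "d \<noteq> 0" using that by (simp add: d_def)
    then have "w / d + x * (w * l / d\<^sup>2) = w * (d + x * l) / d\<^sup>2"
      by (simp add: field_simps power2_eq_square)
    also have "d + x * l = 1" by (simp add: d_def)
    finally show ?thesis by (simp add: d_def power_divide)
  qed
  then show "(norm (resolvent_one A x))\<^sup>2 = W_sum A x + x * W_deriv A x"
    using no_pole
    by (simp add: power2_norm_eq_inner sums(2) W_sum_def W_deriv_def sum_distrib_left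
        flip: sum.distrib)
qed

lemma W_sum_local_min:
  fixes A :: "real^'n^'n"
  assumes sym: "transpose A = A" and no_pole: "\<forall>l\<in>weighted_spec A. l * x \<noteq> 1"
    and min: "\<forall>t\<in>S. W A x \<le> W A t"
  shows "\<forall>\<^sub>F t in at x within S. W_sum A x \<le> W_sum A t"
proof -
  have "\<forall>\<^sub>F t in at x within S. \<forall>l\<in>weighted_spec A. l * t \<noteq> 1"
    using no_pole
    by (intro eventually_ball_finite finite_weighted_spec[OF sym] ballI tendsto_imp_eventually_ne)
      (auto intro!: tendsto_intros)
  moreover have "\<forall>\<^sub>F t in at x within S. t \<in> S" by (simp add: eventually_at_filter)
  ultimately show ?thesis
  proof eventually_elim
    case (elim t)
    then have "W A x \<le> W A t" using min by blast
    then show ?case by (simp add: W_eq_W_sum[OF no_pole] W_eq_W_sum[OF elim(1)])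
  qed
qed

lemma interval_min_deriv_sign:
  fixes f :: "real \<Rightarrow> real"
  assumes deriv: "(f has_real_derivative D) (at x within {a..b})"
    and x: "x \<in> {a..b}" and min: "\<forall>\<^sub>F t in at x within {a..b}. f x \<le> f t"
  shows "0 < D \<Longrightarrow> x = a" and "D < 0 \<Longrightarrow> x = b"
proof -
  obtain d where d: "0 < d" "\<And>t. t \<in> {a..b} \<Longrightarrow> t \<noteq> x \<Longrightarrow> dist t x < d \<Longrightarrow> f x \<le> f t"
    using min unfolding eventually_at by blast
  show "x = a" if pos: "0 < D"
  proof (rule ccontr)
    assume "x \<noteq> a"
    obtain d' where d': "0 < d'" "\<And>h. 0 < h \<Longrightarrow> x - h \<in> {a..b} \<Longrightarrow> h < d' \<Longrightarrow> f (x - h) < f x"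
      using has_real_derivative_pos_inc_left[OF deriv pos] by blast
    define h where "h = min (min d d') (x - a) / 2"
    have "0 < h" "h < d" "h < d'" "x - h \<in> {a..b}"
      using d(1) d'(1) x \<open>x \<noteq> a\<close> by (auto simp: h_def min_def field_simps)
    then show False using d(2)[of "x - h"] d'(2)[of h] by (auto simp: dist_real_def)
  qed
  show "x = b" if neg: "D < 0"
  proof (rule ccontr)
    assume "x \<noteq> b"
    obtain d' where d': "0 < d'" "\<And>h. 0 < h \<Longrightarrow> x + h \<in> {a..b} \<Longrightarrow> h < d' \<Longrightarrow> f (x + h) < f x"
      using has_real_derivative_neg_dec_right[OF deriv neg] by blast
    define h where "h = min (min d d') (b - x) / 2"
    have "0 < h" "h < d" "h < d'" "x + h \<in> {a..b}"
      using d(1) d'(1) x \<open>x \<noteq> b\<close> by (auto simp: h_def min_def field_simps)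
    then show False using d(2)[of "x + h"] d'(2)[of h] by (auto simp: dist_real_def)
  qed
qed

lemma spec_unit_eigenvector:
  assumes "l \<in> spec A"
  obtains v where "A *v v = l *\<^sub>R v" "norm v = 1"
proof -
  obtain v where "v \<noteq> 0" "A *v v = l *\<^sub>R v" using assms unfolding spec_def by blast
  then show ?thesis
    by (intro that[of "v /\<^sub>R norm v"]) (simp_all add: matrix_vector_mult_scaleR)
qed

lemma isotropic_shift_by_eigenvector:
  fixes A :: "real^'n^'n"
  assumes sym: "transpose A = A"
    and v: "A *v v = \<mu> *\<^sub>R v" "norm v = 1" "v \<bullet> u = 0"
    and "\<mu> * x = 1" "x * (u \<bullet> (A *v u)) \<le> 0"
  obtains t where "(u + t *\<^sub>R v) \<bullet> (A *v (u + t *\<^sub>R v)) = 0"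
    and "(norm (u + t *\<^sub>R v))\<^sup>2 = (norm u)\<^sup>2 - x * (u \<bullet> (A *v u))"
proof -
  define t where "t = sqrt (- x * (u \<bullet> (A *v u)))"
  have t: "t * t = - x * (u \<bullet> (A *v u))" using assms(6) by (simp add: t_def)
  have "v \<bullet> (A *v u) = 0"
    using symmetric_matrix_inner[OF sym, of v u] v by simp
  moreover have "u \<bullet> (A *v v) = 0" and "v \<bullet> v = 1"
    using v by (simp_all add: inner_commute power2_norm_eq_inner[symmetric])
  ultimately have quadratic: "(u + t *\<^sub>R v) \<bullet> (A *v (u + t *\<^sub>R v)) = u \<bullet> (A *v u) + t * t * \<mu>"
    and norm: "(norm (u + t *\<^sub>R v))\<^sup>2 = (norm u)\<^sup>2 + t * t"
    using v unfolding power2_norm_eq_inner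
    by (simp_all add: matrix_vector_right_distrib matrix_vector_mult_scaleR inner_add_left
        inner_add_right inner_commute algebra_simps)
  have "(u + t *\<^sub>R v) \<bullet> (A *v (u + t *\<^sub>R v)) = (1 - \<mu> * x) * (u \<bullet> (A *v u))"
    unfolding quadratic t by (simp add: algebra_simps)
  then show ?thesis
    using that norm t \<open>\<mu> * x = 1\<close> by simp
qed

lemma isotropic_vector_at_critical_point:
  fixes A :: "real^'n^'n"
  assumes sym: "transpose A = A" and no_pole: "\<forall>l\<in>weighted_spec A. l * x \<noteq> 1"
    and crit: "W_deriv A x = 0 \<or> (\<exists>\<mu>\<in>spec A. \<mu> * x = 1 \<and> x * W_deriv A x \<le> 0)"
  shows "\<exists>u. (norm u)\<^sup>2 = W_sum A x \<and> u \<bullet> (A *v u) = 0 \<and> (norm u)\<^sup>2 = vec 1 \<bullet> u"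
  using crit
proof
  assume "W_deriv A x = 0"
  then show ?thesis
    using resolvent_one_identities[OF sym no_pole] by (intro exI[of _ "resolvent_one A x"]) simp
next
  assume "\<exists>\<mu>\<in>spec A. \<mu> * x = 1 \<and> x * W_deriv A x \<le> 0"
  then obtain \<mu> where \<mu>: "\<mu> \<in> spec A" "\<mu> * x = 1" "x * W_deriv A x \<le> 0" by blast
  then have weight: "spec_weight A \<mu> = 0"
    using no_pole unfolding weighted_spec_def by auto
  obtain v where v: "A *v v = \<mu> *\<^sub>R v" "norm v = 1" using spec_unit_eigenvector[OF \<mu>(1)] .
  have "v \<bullet> proj_one A l = 0" if "l \<in> weighted_spec A" for l
  proof -
    have "\<mu> \<noteq> l" using that weight unfolding weighted_spec_def by auto
    then show ?thesis by (rule eigenvectors_orthogonal[OF sym v(1) proj_one_eigenvector])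
  qed
  then have "v \<bullet> resolvent_one A x = 0"
    by (simp add: resolvent_one_def inner_sum_right)
  then obtain t where
    "(resolvent_one A x + t *\<^sub>R v) \<bullet> (A *v (resolvent_one A x + t *\<^sub>R v)) = 0"
    "(norm (resolvent_one A x + t *\<^sub>R v))\<^sup>2 = W_sum A x"
    using isotropic_shift_by_eigenvector[OF sym v _ \<mu>(2)] \<mu>(3)
    by (metis resolvent_one_identities(2,3)[OF sym no_pole] add_diff_cancel_right')
  moreover have "vec 1 \<bullet> (resolvent_one A x + t *\<^sub>R v) = W_sum A x"
    using inner_one_eigenvector_eq_zero[OF weight v(1)] resolvent_one_identities(1)[OF sym no_pole]
    by (simp add: inner_add_right)
  ultimately show ?thesis by metis
qed

lemma W_interval_minimizer_critical:
  fixes A :: "real^'n^'n"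
  assumes adj: "weighted_adjacency E A" and "A \<noteq> 0"
    and x: "x \<in> {inverse (lambda_min A) .. inverse (lambda_max A)}"
    and min: "\<forall>t \<in> {inverse (lambda_min A) .. inverse (lambda_max A)}. W A x \<le> W A t"
  shows "\<forall>l\<in>weighted_spec A. l * x \<noteq> 1"
    and "W_deriv A x = 0 \<or> (\<exists>\<mu>\<in>spec A. \<mu> * x = 1 \<and> x * W_deriv A x \<le> 0)"
proof -
  have sym: "transpose A = A" using adj by (simp add: weighted_adjacency_def)
  note signs = weighted_adjacency_spec_signs[OF adj \<open>A \<noteq> 0\<close>]
  define a b where "a = inverse (lambda_min A)" and "b = inverse (lambda_max A)"
  have "a < 0" "0 < b" using signs by (simp_all add: a_def b_def)
  then have "W A x \<le> W A 0" using min by (simp add: a_def b_def)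
  also have "W A 0 = ereal (W_sum A 0)" by (rule W_eq_W_sum) simp
  finally show no_pole: "\<forall>l\<in>weighted_spec A. l * x \<noteq> 1" using W_pole by force
  have "\<forall>\<^sub>F t in at x within {a..b}. W_sum A x \<le> W_sum A t"
    using W_sum_local_min[OF sym no_pole] min by (simp add: a_def b_def)
  note endpoint = interval_min_deriv_sign[OF W_sum_has_real_derivative[OF sym no_pole]
      x[folded a_def b_def] this]
  consider "W_deriv A x = 0" | "0 < W_deriv A x" | "W_deriv A x < 0" by linarith
  then show "W_deriv A x = 0 \<or> (\<exists>\<mu>\<in>spec A. \<mu> * x = 1 \<and> x * W_deriv A x \<le> 0)"
  proof cases
    case 2
    then have "lambda_min A * x = 1" "x * W_deriv A x \<le> 0"
      using endpoint(1) signs(3) \<open>a < 0\<close> by (simp_all add: a_def mult_neg_pos less_imp_le)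
    then show ?thesis using signs(1) by blast
  next
    case 3
    then have "lambda_max A * x = 1" "x * W_deriv A x \<le> 0"
      using endpoint(2) signs(4) \<open>0 < b\<close> by (simp_all add: b_def mult_pos_neg less_imp_le)
    then show ?thesis using signs(2) by blast
  qed simp
qed

theorem proposition7:
  fixes E :: "'n::finite \<Rightarrow> 'n \<Rightarrow> bool" and A :: "real^'n^'n" and y :: real
  assumes "weighted_adjacency E A"
    and "A \<noteq> 0"
    and "W A y \<in> W A ` {inverse (lambda_min A) .. inverse (lambda_max A)}"
    and "\<forall>x \<in> {inverse (lambda_min A) .. inverse (lambda_max A)}. W A y \<le> W A x"
  shows "\<exists>u :: real^'n. ereal ((norm u)\<^sup>2) = W A y \<and> u \<bullet> (A *v u) = 0
           \<and> (norm u)\<^sup>2 = vec 1 \<bullet> u"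
proof -
  obtain x where x: "x \<in> {inverse (lambda_min A) .. inverse (lambda_max A)}" "W A x = W A y"
    using assms(3) by auto
  moreover have "\<forall>t \<in> {inverse (lambda_min A) .. inverse (lambda_max A)}. W A x \<le> W A t"
    using assms(4) x(2) by simp
  ultimately have no_pole: "\<forall>l\<in>weighted_spec A. l * x \<noteq> 1"
    and critical: "W_deriv A x = 0 \<or> (\<exists>\<mu>\<in>spec A. \<mu> * x = 1 \<and> x * W_deriv A x \<le> 0)"
    using W_interval_minimizer_critical[OF assms(1,2)] by blast+
  have sym: "transpose A = A" using assms(1) by (simp add: weighted_adjacency_def)
  obtain u where "(norm u)\<^sup>2 = W_sum A x" "u \<bullet> (A *v u) = 0" "(norm u)\<^sup>2 = vec 1 \<bullet> u"
    using isotropic_vector_at_critical_point[OF sym no_pole critical] by blast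
  moreover have "W A y = ereal (W_sum A x)"
    using x(2) W_eq_W_sum[OF no_pole] by simp
  ultimately show ?thesis by auto
qed

end
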